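(* Let $T=(V,E)$ be a finite undirected tree, let $\mathcal{O}$ be a nonempty proper subset of $V$, and consider the infection model described in the context. Let $R\subset[\mathcal{O}]$ be a star arrangement of classes and $\partial R:=\bigcup_{r\in R}\partial r$. If $s\in\bigcup_{r\in R}r$, then the statistic $(\tau_o)_{o\in\partial R}$ is sufficient for $s$; that is, as the source $s$ ranges over $\bigcup_{r\in R}r$, the conditional distribution of the full observer vector $(\tau_o)_{o\in\mathcal{O}}$ given $(\tau_o)_{o\in\partial R}$ does not depend on $s$.
   Context: Infection model: an infection starts at time $0$ at a single unknown node $s\in V$ (the source). For each edge $e\in E$ there is a nonnegative random delay $\tau_e$ with a continuous distribution of known law, and the $\tau_e$, $e\in E$, are independent. For $u,v\in V$, $[u,v]$ denotes the set of edges (or vertices) of the unique path in $T$ between $u$ and $v$. The infection time of $v$ is $\tau_v:=\sum_{e\in[s,v]}\tau_e$. The observers are the nodes of $\mathcal{O}$. Equivalence classes: for $u,v\in V\setminus\mathcal{O}$, $u\equiv v$ iff $[u,v]\cap\mathcal{O}=\emptyset$ (vertex sets); $[\mathcal{O}]$ is the set of classes. For $r\in[\mathcal{O}]$, $\partial r$ is the set of observers adjacent to some node of $r$. A set $R\subset[\mathcal{O}]$ is a star arrangement if $\bigcap_{r\in R}\partial r\neq\emptyset$. *)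

theory Defs
  imports "HOL-Probability.Probability"
begin

definition is_path :: "'a set set \<Rightarrow> 'a list \<Rightarrow> bool" where
  "is_path E p \<longleftrightarrow> p \<noteq> [] \<and> distinct p \<and> (\<forall>i. Suc i < length p \<longrightarrow> {p ! i, p ! Suc i} \<in> E)"

definition is_tree :: "'a set \<Rightarrow> 'a set set \<Rightarrow> bool" where
  "is_tree V E \<longleftrightarrow> finite V \<and> V \<noteq> {} \<and> (\<forall>e\<in>E. e \<subseteq> V \<and> card e = 2) \<and>
     (\<forall>u\<in>V. \<forall>v\<in>V. \<exists>!p. is_path E p \<and> hd p = u \<and> last p = v)"

definition tree_path :: "'a set set \<Rightarrow> 'a \<Rightarrow> 'a \<Rightarrow> 'a list" where
  "tree_path E u v = (THE p. is_path E p \<and> hd p = u \<and> last p = v)"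

definition path_vertices :: "'a set set \<Rightarrow> 'a \<Rightarrow> 'a \<Rightarrow> 'a set" where
  "path_vertices E u v = set (tree_path E u v)"

definition path_edges :: "'a set set \<Rightarrow> 'a \<Rightarrow> 'a \<Rightarrow> 'a set set" where
  "path_edges E u v = (let p = tree_path E u v in {{p ! i, p ! Suc i} | i. Suc i < length p})"

definition obs_equiv :: "'a set \<Rightarrow> 'a set set \<Rightarrow> 'a set \<Rightarrow> ('a \<times> 'a) set" where
  "obs_equiv V E Obs = {(u, v). u \<in> V - Obs \<and> v \<in> V - Obs \<and> path_vertices E u v \<inter> Obs = {}}"

definition obs_classes :: "'a set \<Rightarrow> 'a set set \<Rightarrow> 'a set \<Rightarrow> 'a set set" where
  "obs_classes V E Obs = (V - Obs) // obs_equiv V E Obs"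

definition obs_boundary :: "'a set set \<Rightarrow> 'a set \<Rightarrow> 'a set \<Rightarrow> 'a set" where
  "obs_boundary E Obs r = {w \<in> Obs. \<exists>v\<in>r. {w, v} \<in> E}"

definition star_arrangement :: "'a set \<Rightarrow> 'a set set \<Rightarrow> 'a set \<Rightarrow> 'a set set \<Rightarrow> bool" where
  "star_arrangement V E Obs R \<longleftrightarrow> R \<subseteq> obs_classes V E Obs \<and> (\<Inter>r\<in>R. obs_boundary E Obs r) \<noteq> {}"

definition boundary_set :: "'a set set \<Rightarrow> 'a set \<Rightarrow> 'a set set \<Rightarrow> 'a set" where
  "boundary_set E Obs R = (\<Union>r\<in>R. obs_boundary E Obs r)"

text \<open>Canonical realisation: a sample point assigns to each edge its delay; the delays are
  independent with laws mu e, i.e. the sample space is the product measure PiM E mu.\<close>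

definition infection_time :: "'a set set \<Rightarrow> 'a \<Rightarrow> 'a \<Rightarrow> ('a set \<Rightarrow> real) \<Rightarrow> real" where
  "infection_time E s v \<omega> = (\<Sum>e\<in>path_edges E s v. \<omega> e)"

definition obs_vector :: "'a set set \<Rightarrow> 'a set \<Rightarrow> 'a \<Rightarrow> ('a set \<Rightarrow> real) \<Rightarrow> ('a \<Rightarrow> real)" where
  "obs_vector E Obs s \<omega> = (\<lambda>w\<in>Obs. infection_time E s w \<omega>)"

end

theory Submission
  imports Defs
begin

(* Fix an observer c adjacent to every class of R and call \<Union>R \<union> \<partial>R the star region. For an
  observer w let g w be the last vertex of the path from c to w lying in the star region; it is
  a boundary observer, because every neighbour of a vertex of a class of R is in the region.
  For every source s \<in> \<Union>R the path [s, w] is [s, g w] followed by [g w, w], where the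
  first part uses only edges inside the star region and the second only edges outside it. So
  \<tau>(w) = \<tau>(g w) + (delays on [g w, w]), the boundary times are functions of the inside
  delays, and the outside delays are independent of them. Given boundary times v, the observer
  vector is thus the image of the outside delays under y \<mapsto> (v (g w) + sum of y on [g w, w])
  for w \<in> Obs, a kernel that does not involve s. *)

fun walk :: "'a set set \<Rightarrow> 'a list \<Rightarrow> bool" where
  "walk E [] \<longleftrightarrow> False"
| "walk E [x] \<longleftrightarrow> True"
| "walk E (x # y # xs) \<longleftrightarrow> {x, y} \<in> E \<and> walk E (y # xs)"

fun walk_edges :: "'a list \<Rightarrow> 'a set set" where
  "walk_edges [] = {}"
| "walk_edges [x] = {}"
| "walk_edges (x # y # xs) = insert {x, y} (walk_edges (y # xs))"

lemma walk_edges_conv_nth: "walk_edges p = (\<lambda>i. {p ! i, p ! Suc i}) ` {i. Suc i < length p}"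
proof (induction p rule: walk_edges.induct)
  case (3 x y xs)
  have "{i. Suc i < length (x # y # xs)} = insert 0 (Suc ` {i. Suc i < length (y # xs)})"
    by (auto simp: image_iff less_Suc_eq_0_disj)
  then show ?case using 3 by (simp add: image_image)
qed auto

lemma walk_iff_nth: "walk E p \<longleftrightarrow> p \<noteq> [] \<and> (\<forall>i. Suc i < length p \<longrightarrow> {p ! i, p ! Suc i} \<in> E)"
  by (induction p rule: walk_edges.induct) (auto simp: less_Suc_eq_0_disj nth_Cons split: nat.splits)

lemma path_edges_eq_walk_edges: "path_edges E u v = walk_edges (tree_path E u v)"
  unfolding path_edges_def walk_edges_conv_nth Let_def by blast

lemma is_path_iff_walk: "is_path E p \<longleftrightarrow> walk E p \<and> distinct p"
  unfolding is_path_def walk_iff_nth by auto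

lemma walk_not_Nil: "walk E p \<Longrightarrow> p \<noteq> []"
  by auto

lemma walk_append_iff: "walk E (xs @ y # ys) \<longleftrightarrow> walk E (xs @ [y]) \<and> walk E (y # ys)"
  by (induction xs rule: walk_edges.induct) auto

lemma walk_appendI: "walk E xs \<Longrightarrow> walk E ys \<Longrightarrow> {last xs, hd ys} \<in> E \<Longrightarrow> walk E (xs @ ys)"
proof (induction xs rule: walk_edges.induct)
  case (2 x)
  then show ?case by (cases ys) auto
qed auto

lemma walk_join:
  assumes "walk E xs" "walk E ys" "last xs = hd ys"
  shows "walk E (xs @ tl ys)"
proof -
  obtain xs' y where "xs = xs' @ [y]" using assms(1) by (cases xs rule: rev_cases) auto
  moreover obtain ys' where "ys = y # ys'" using assms(2,3) \<open>xs = xs' @ [y]\<close> by (cases ys) auto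
  ultimately show ?thesis using assms walk_append_iff[of E xs' y ys'] by simp
qed

lemma last_append_tl: "xs \<noteq> [] \<Longrightarrow> ys \<noteq> [] \<Longrightarrow> last xs = hd ys \<Longrightarrow> last (xs @ tl ys) = last ys"
  by (cases ys) (auto simp: last_append)

lemma walk_rev: "walk E xs \<Longrightarrow> walk E (rev xs)"
proof (induction xs rule: walk_edges.induct)
  case (3 x y xs)
  then have "walk E (rev xs @ [y])" and "walk E [y, x]" by (simp_all add: insert_commute)
  then show ?case using walk_append_iff[of E "rev xs" y "[x]"] by simp
qed auto

lemma walk_edges_append: "walk_edges (xs @ y # ys) = walk_edges (xs @ [y]) \<union> walk_edges (y # ys)"
  by (induction xs rule: walk_edges.induct) auto

lemma walk_edges_join:
  assumes "xs \<noteq> []" "ys \<noteq> []" "last xs = hd ys"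
  shows "walk_edges (xs @ tl ys) = walk_edges xs \<union> walk_edges ys"
proof -
  obtain xs' y where "xs = xs' @ [y]" using assms(1) by (cases xs rule: rev_cases) auto
  moreover obtain ys' where "ys = y # ys'" using assms(2,3) \<open>xs = xs' @ [y]\<close> by (cases ys) auto
  ultimately show ?thesis using walk_edges_append[of xs' y ys'] by simp
qed

lemma walk_edges_subset: "walk E p \<Longrightarrow> walk_edges p \<subseteq> E"
  by (induction p rule: walk_edges.induct) auto

lemma walk_edge_subset_set: "e \<in> walk_edges p \<Longrightarrow> e \<subseteq> set p"
  by (induction p rule: walk_edges.induct) auto

lemma walk_edge_meets_tl: "e \<in> walk_edges p \<Longrightarrow> e \<inter> set (tl p) \<noteq> {}"
  by (induction p rule: walk_edges.induct) auto

lemma walk_shortcut: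
  "walk E xs \<Longrightarrow> \<exists>p. is_path E p \<and> hd p = hd xs \<and> last p = last xs \<and> set p \<subseteq> set xs"
proof (induction "length xs" arbitrary: xs rule: less_induct)
  case less
  show ?case
  proof (cases "distinct xs")
    case True
    then show ?thesis using less.prems by (auto simp: is_path_iff_walk)
  next
    case False
    then obtain a y b c where xs: "xs = a @ [y] @ b @ [y] @ c"
      using not_distinct_decomp by blast
    have "walk E (a @ y # (b @ y # c))" using less.prems by (simp add: xs)
    then have "walk E (a @ [y])" "walk E ((y # b) @ y # c)"
      using walk_append_iff[of E a y "b @ y # c"] by simp_all
    then have "walk E (a @ [y])" "walk E (y # c)"
      using walk_append_iff[of E "y # b" y c] by blast+
    then have "walk E (a @ y # c)" using walk_append_iff[of E a y c] by blast
    moreover have "length (a @ y # c) < length xs" by (simp add: xs)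
    ultimately obtain p where "is_path E p" "hd p = hd (a @ y # c)" "last p = last (a @ y # c)"
        "set p \<subseteq> set (a @ y # c)"
      using less.hyps by metis
    moreover have "hd (a @ y # c) = hd xs" "last (a @ y # c) = last xs" "set (a @ y # c) \<subseteq> set xs"
      unfolding xs by (simp_all add: hd_append last_append) auto
    ultimately show ?thesis by (intro exI[of _ p]) auto
  qed
qed

locale tree =
  fixes V :: "'a set" and E :: "'a set set"
  assumes is_tree: "is_tree V E"
begin

lemma finite_E: "finite E"
proof -
  have "E \<subseteq> Pow V" and "finite V" using is_tree unfolding is_tree_def by blast+
  then show ?thesis by (meson finite_Pow_iff finite_subset)
qed

lemma edge_subset_V: "e \<in> E \<Longrightarrow> e \<subseteq> V"
  using is_tree unfolding is_tree_def by blast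

lemma walk_subset_V: "walk E p \<Longrightarrow> hd p \<in> V \<Longrightarrow> set p \<subseteq> V"
  by (induction p rule: walk_edges.induct) (auto dest: edge_subset_V)

lemma ex1_path: "u \<in> V \<Longrightarrow> v \<in> V \<Longrightarrow> \<exists>!p. is_path E p \<and> hd p = u \<and> last p = v"
  using is_tree unfolding is_tree_def by blast

lemma tree_path:
  assumes "u \<in> V" "v \<in> V"
  shows "is_path E (tree_path E u v)" "hd (tree_path E u v) = u" "last (tree_path E u v) = v"
  using theI'[OF ex1_path[OF assms]] unfolding tree_path_def by auto

lemma walk_tree_path: "u \<in> V \<Longrightarrow> v \<in> V \<Longrightarrow> walk E (tree_path E u v)"
  using tree_path(1) by (simp add: is_path_iff_walk)

lemma distinct_tree_path: "u \<in> V \<Longrightarrow> v \<in> V \<Longrightarrow> distinct (tree_path E u v)"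
  using tree_path(1) by (simp add: is_path_iff_walk)

lemma tree_path_unique:
  assumes "u \<in> V" "v \<in> V" "is_path E p" "hd p = u" "last p = v"
  shows "tree_path E u v = p"
  unfolding tree_path_def by (rule the1_equality[OF ex1_path[OF assms(1,2)]]) (use assms in auto)

lemma set_tree_path_subset_V: "u \<in> V \<Longrightarrow> v \<in> V \<Longrightarrow> set (tree_path E u v) \<subseteq> V"
  using walk_subset_V walk_tree_path tree_path(2) by metis

lemma path_edges_subset_E: "u \<in> V \<Longrightarrow> v \<in> V \<Longrightarrow> path_edges E u v \<subseteq> E"
  unfolding path_edges_eq_walk_edges using walk_edges_subset walk_tree_path by blast

lemma tree_path_subset_walk:
  assumes "walk E xs" "hd xs \<in> V"
  shows "set (tree_path E (hd xs) (last xs)) \<subseteq> set xs"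
proof -
  obtain p where p: "is_path E p" "hd p = hd xs" "last p = last xs" "set p \<subseteq> set xs"
    using walk_shortcut[OF assms(1)] by blast
  have "last xs \<in> V" using walk_subset_V[OF assms] walk_not_Nil[OF assms(1)] by auto
  then show ?thesis using tree_path_unique[OF assms(2) _ p(1-3)] p(4) by simp
qed

lemma tree_path_split:
  assumes "u \<in> V" "v \<in> V" "tree_path E u v = a @ z # c"
  shows "tree_path E u z = a @ [z]" "tree_path E z v = z # c"
proof -
  have "walk E (a @ z # c)" "distinct (a @ z # c)"
    using walk_tree_path[OF assms(1,2)] distinct_tree_path[OF assms(1,2)] assms(3) by simp_all
  then have paths: "is_path E (a @ [z])" "is_path E (z # c)"
    using walk_append_iff[of E a z c] by (simp_all add: is_path_iff_walk)
  have "z \<in> V" using set_tree_path_subset_V[OF assms(1,2)] assms(3) by auto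
  moreover have "hd (a @ [z]) = u"
    using tree_path(2)[OF assms(1,2)] assms(3) by (cases a) simp_all
  moreover have "last (z # c) = v"
    using tree_path(3)[OF assms(1,2)] assms(3) by (simp add: last_append)
  ultimately show "tree_path E u z = a @ [z]" "tree_path E z v = z # c"
    using tree_path_unique assms(1,2) paths by auto
qed

lemma tree_path_append:
  assumes "u \<in> V" "h \<in> V" "v \<in> V"
    and meet: "set (tree_path E u h) \<inter> set (tree_path E h v) \<subseteq> {h}"
  shows "tree_path E u v = tree_path E u h @ tl (tree_path E h v)"
proof -
  let ?p = "tree_path E u h" and ?q = "tree_path E h v"
  have ne: "?p \<noteq> []" "?q \<noteq> []" and ends: "last ?p = hd ?q"
    using walk_tree_path walk_not_Nil tree_path(2,3) assms(1-3) by auto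
  have "h \<notin> set (tl ?q)"
    using distinct_tree_path[OF assms(2,3)] tree_path(2)[OF assms(2,3)] ne(2)
    by (metis distinct.simps(2) list.collapse)
  moreover have "set (tl ?q) \<subseteq> set ?q" by (cases ?q) auto
  ultimately have "distinct (?p @ tl ?q)"
    using meet distinct_tree_path assms(1-3) by (auto simp: distinct_tl)
  moreover have "walk E (?p @ tl ?q)"
    using walk_join walk_tree_path ends assms(1-3) by blast
  moreover have "hd (?p @ tl ?q) = u" "last (?p @ tl ?q) = v"
    using ne ends tree_path(2,3) assms(1-3)
    by (simp_all add: last_append_tl)
  ultimately show ?thesis
    using tree_path_unique[OF assms(1,3)] by (simp add: is_path_iff_walk)
qed

lemma path_edges_append:
  assumes "u \<in> V" "h \<in> V" "v \<in> V"
    and "set (tree_path E u h) \<inter> set (tree_path E h v) \<subseteq> {h}"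
  shows "path_edges E u v = path_edges E u h \<union> path_edges E h v"
  unfolding path_edges_eq_walk_edges tree_path_append[OF assms]
  using assms(1-3) by (intro walk_edges_join walk_not_Nil[of E] walk_tree_path) (simp_all add: tree_path)

lemma last_exit:
  assumes "S \<subseteq> V" "u \<in> S" "v \<in> V"
  obtains h where "h \<in> S" "set (tl (tree_path E h v)) \<inter> S = {}"
proof -
  have "u \<in> set (tree_path E u v)"
    using tree_path(2) walk_tree_path walk_not_Nil assms by (metis list.set_sel(1) subsetD)
  then obtain a h c where split: "tree_path E u v = a @ h # c" "h \<in> S" "\<forall>y\<in>set c. y \<notin> S"
    using split_list_last_prop[of "tree_path E u v" "\<lambda>x. x \<in> S"] assms(2) by blast
  then have "tree_path E h v = h # c"
    using tree_path_split assms by blast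
  then show ?thesis using split by (intro that[of h]) auto
qed

lemma obs_equiv_if_walk:
  assumes "walk E xs" "hd xs \<in> V" "set xs \<inter> Obs = {}"
  shows "(hd xs, last xs) \<in> obs_equiv V E Obs"
proof -
  have "set xs \<subseteq> V" using walk_subset_V assms(1,2) .
  moreover have "hd xs \<in> set xs" "last xs \<in> set xs" using walk_not_Nil[OF assms(1)] by simp_all
  ultimately show ?thesis
    using tree_path_subset_walk[OF assms(1,2)] assms(3)
    unfolding obs_equiv_def path_vertices_def by auto
qed

lemma obs_class_subset: "r \<in> obs_classes V E Obs \<Longrightarrow> r \<subseteq> V - Obs"
  unfolding obs_classes_def obs_equiv_def by (auto elim!: quotientE)

lemma obs_class_neighbour:
  assumes r: "r \<in> obs_classes V E Obs" and "h \<in> r" "{h, w} \<in> E" "w \<notin> Obs"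
  shows "w \<in> r"
proof -
  obtain x where x: "x \<in> V - Obs" "r = obs_equiv V E Obs `` {x}"
    using r unfolding obs_classes_def by (auto elim!: quotientE)
  let ?p = "tree_path E x h"
  have h: "h \<in> V" "set ?p \<inter> Obs = {}"
    using \<open>h \<in> r\<close> x unfolding obs_equiv_def path_vertices_def by auto
  have p: "walk E ?p" "?p \<noteq> []" "hd ?p = x" "last ?p = h"
    using walk_tree_path walk_not_Nil tree_path(2,3) x h by auto
  then have "walk E (?p @ [w])" "hd (?p @ [w]) = x"
    using walk_appendI[of E ?p "[w]"] assms(3) by auto
  then have "(x, w) \<in> obs_equiv V E Obs"
    using obs_equiv_if_walk[of "?p @ [w]"] x h assms(4) by auto
  then show "w \<in> r" using x by simp
qed

lemma obs_class_walk:
  assumes r: "r \<in> obs_classes V E Obs" and "u \<in> r" "v \<in> r"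
  obtains xs where "walk E xs" "hd xs = u" "last xs = v" "set xs \<subseteq> r"
proof -
  obtain x where x: "x \<in> V - Obs" "r = obs_equiv V E Obs `` {x}"
    using r unfolding obs_classes_def by (auto elim!: quotientE)
  have path_in_class: "set (tree_path E x z) \<subseteq> r" if "z \<in> r" for z
  proof
    fix y assume y: "y \<in> set (tree_path E x z)"
    have z: "z \<in> V" "set (tree_path E x z) \<inter> Obs = {}"
      using \<open>z \<in> r\<close> x unfolding obs_equiv_def path_vertices_def by auto
    obtain a c where "tree_path E x z = a @ y # c" using y split_list by metis
    then have "set (tree_path E x y) \<subseteq> set (tree_path E x z)"
      using tree_path_split(1) x z by auto
    moreover have "y \<in> V" using set_tree_path_subset_V x z y by auto
    ultimately have "(x, y) \<in> obs_equiv V E Obs"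
      using x z y unfolding obs_equiv_def path_vertices_def by auto
    then show "y \<in> r" using x by simp
  qed
  let ?p = "tree_path E x u" and ?q = "tree_path E x v"
  have V: "x \<in> V" "u \<in> V" "v \<in> V" using x assms obs_class_subset by auto
  have ne: "rev ?p \<noteq> []" "?q \<noteq> []" using walk_not_Nil walk_tree_path V by auto
  have ends: "last (rev ?p) = hd ?q" using tree_path(2) V ne by (simp add: last_rev)
  show ?thesis
  proof (rule that)
    show "walk E (rev ?p @ tl ?q)"
      using walk_join[OF walk_rev _ ends] walk_tree_path V by blast
    show "hd (rev ?p @ tl ?q) = u" using ne tree_path(3) V by (simp add: hd_rev)
    show "last (rev ?p @ tl ?q) = v" using last_append_tl[OF ne ends] tree_path(3) V by simp
    have "set (tl ?q) \<subseteq> set ?q" by (cases ?q) auto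
    then show "set (rev ?p @ tl ?q) \<subseteq> r" using path_in_class assms(2,3) by auto
  qed
qed

end

definition star_region :: "'a set set \<Rightarrow> 'a set \<Rightarrow> 'a set set \<Rightarrow> 'a set" where
  "star_region E Obs R = \<Union>R \<union> boundary_set E Obs R"

definition star_edges :: "'a set set \<Rightarrow> 'a set \<Rightarrow> 'a set set \<Rightarrow> 'a set set" where
  "star_edges E Obs R = {e \<in> E. e \<subseteq> star_region E Obs R}"

context tree
begin

lemma boundary_set_subset: "boundary_set E Obs R \<subseteq> Obs \<inter> V"
  unfolding boundary_set_def obs_boundary_def using edge_subset_V by blast

lemma star_region_subset_V: "R \<subseteq> obs_classes V E Obs \<Longrightarrow> star_region E Obs R \<subseteq> V"
  unfolding star_region_def using boundary_set_subset obs_class_subset by blast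

lemma star_region_neighbour:
  assumes "R \<subseteq> obs_classes V E Obs" "h \<in> \<Union>R" "{h, w} \<in> E"
  shows "w \<in> star_region E Obs R"
proof -
  obtain r where r: "r \<in> R" "h \<in> r" using assms(2) by blast
  show ?thesis
  proof (cases "w \<in> Obs")
    case True
    then have "w \<in> obs_boundary E Obs r"
      using r assms(3) unfolding obs_boundary_def by (auto simp: insert_commute)
    then show ?thesis using r unfolding star_region_def boundary_set_def by blast
  next
    case False
    then show ?thesis
      using obs_class_neighbour r assms unfolding star_region_def by blast
  qed
qed

lemma tree_path_in_star_region:
  assumes star: "star_arrangement V E Obs R" and s: "s \<in> \<Union>R" and b: "b \<in> boundary_set E Obs R"
  shows "set (tree_path E s b) \<subseteq> star_region E Obs R"
proof -
  have classes: "R \<subseteq> obs_classes V E Obs" using star unfolding star_arrangement_def by blast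
  obtain c where c: "\<forall>r\<in>R. c \<in> obs_boundary E Obs r"
    using star unfolding star_arrangement_def by blast
  obtain r1 where r1: "r1 \<in> R" "s \<in> r1" using s by blast
  obtain r2 b' where r2: "r2 \<in> R" "b' \<in> r2" "{b, b'} \<in> E"
    using b unfolding boundary_set_def obs_boundary_def by blast
  obtain c1 c2 where c12: "c1 \<in> r1" "{c, c1} \<in> E" "c2 \<in> r2" "{c, c2} \<in> E"
    using c r1 r2 unfolding obs_boundary_def by blast
  obtain xs1 where xs1: "walk E xs1" "hd xs1 = s" "last xs1 = c1" "set xs1 \<subseteq> r1"
    using obs_class_walk classes r1 c12 by blast
  obtain xs2 where xs2: "walk E xs2" "hd xs2 = c2" "last xs2 = b'" "set xs2 \<subseteq> r2"
    using obs_class_walk classes r2 c12 by blast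
  have ne: "xs1 \<noteq> []" "xs2 \<noteq> []" using xs1(1) xs2(1) walk_not_Nil by blast+
  let ?W = "xs1 @ [c] @ xs2 @ [b]"
  have "walk E (xs2 @ [b])" using walk_appendI[of E xs2 "[b]"] xs2 r2 by (simp add: insert_commute)
  then have "walk E ([c] @ xs2 @ [b])" using walk_appendI[of E "[c]"] xs2 c12 ne by simp
  then have "walk E ?W" using walk_appendI[of E xs1] xs1 c12 by (simp add: insert_commute)
  moreover have "hd ?W = s" "last ?W = b" using xs1 ne by simp_all
  moreover have "s \<in> V" using s classes obs_class_subset by blast
  ultimately have "set (tree_path E s b) \<subseteq> set ?W" using tree_path_subset_walk[of ?W] by simp
  moreover have "c \<in> boundary_set E Obs R" using c r1 unfolding boundary_set_def by blast
  then have "set ?W \<subseteq> star_region E Obs R"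
    using xs1(4) xs2(4) r1 r2 b unfolding star_region_def by auto
  ultimately show ?thesis by blast
qed

lemma path_edges_in_star_edges:
  assumes "star_arrangement V E Obs R" "s \<in> \<Union>R" "b \<in> boundary_set E Obs R"
  shows "path_edges E s b \<subseteq> star_edges E Obs R"
proof -
  have "R \<subseteq> obs_classes V E Obs" using assms(1) unfolding star_arrangement_def by blast
  then have "s \<in> V" "b \<in> V" using assms(2,3) boundary_set_subset obs_class_subset by blast+
  show ?thesis
  proof
    fix e assume "e \<in> path_edges E s b"
    then have e: "e \<in> walk_edges (tree_path E s b)" by (simp add: path_edges_eq_walk_edges)
    then have "e \<in> E" using walk_edges_subset[OF walk_tree_path] \<open>s \<in> V\<close> \<open>b \<in> V\<close> by blast
    moreover have "e \<subseteq> star_region E Obs R"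
      using walk_edge_subset_set[OF e] tree_path_in_star_region[OF assms] by blast
    ultimately show "e \<in> star_edges E Obs R" unfolding star_edges_def by blast
  qed
qed

lemma boundary_gate:
  assumes star: "star_arrangement V E Obs R" and "R \<noteq> {}" and ob: "ob \<in> Obs" "ob \<in> V"
  obtains g where "g \<in> boundary_set E Obs R" "path_edges E g ob \<subseteq> E - star_edges E Obs R"
    "\<And>s. s \<in> \<Union>R \<Longrightarrow> path_edges E s ob = path_edges E s g \<union> path_edges E g ob"
proof -
  let ?S = "star_region E Obs R"
  have classes: "R \<subseteq> obs_classes V E Obs" using star unfolding star_arrangement_def by blast
  obtain c where "c \<in> boundary_set E Obs R"
    using star \<open>R \<noteq> {}\<close> unfolding star_arrangement_def boundary_set_def by blast
  then obtain g where g: "g \<in> ?S" "set (tl (tree_path E g ob)) \<inter> ?S = {}"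
    using last_exit[OF star_region_subset_V[OF classes] _ ob(2)] unfolding star_region_def by blast
  have gV: "g \<in> V" using g star_region_subset_V classes by blast
  have path_g: "tree_path E g ob = g # tl (tree_path E g ob)"
    using tree_path(2) walk_tree_path walk_not_Nil gV ob by (metis list.collapse)
  have "g \<in> boundary_set E Obs R"
  proof (rule ccontr)
    assume "g \<notin> boundary_set E Obs R"
    then have "g \<in> \<Union>R" using g unfolding star_region_def by blast
    then have "g \<noteq> ob" using classes obs_class_subset ob by blast
    then obtain w c where "tree_path E g ob = g # w # c"
      using path_g tree_path(3)[OF gV ob(2)] by (metis last.simps list.exhaust)
    then have "{g, w} \<in> E" "w \<notin> ?S"
      using walk_tree_path[OF gV ob(2)] g(2) by auto
    then show False using star_region_neighbour[OF classes \<open>g \<in> \<Union>R\<close>] by blast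
  qed
  moreover have "path_edges E g ob \<subseteq> E - star_edges E Obs R"
    using walk_edge_meets_tl g(2) path_edges_subset_E[OF gV ob(2)]
    unfolding path_edges_eq_walk_edges star_edges_def by fast
  moreover have "path_edges E s ob = path_edges E s g \<union> path_edges E g ob" if s: "s \<in> \<Union>R" for s
  proof (rule path_edges_append)
    show "s \<in> V" using s classes obs_class_subset by blast
    show "set (tree_path E s g) \<inter> set (tree_path E g ob) \<subseteq> {g}"
      using tree_path_in_star_region[OF star s \<open>g \<in> boundary_set E Obs R\<close>] g(2)
        arg_cong[where f = set, OF path_g]
      by auto
  qed (use gV ob in auto)
  ultimately show ?thesis by (rule that)
qed

lemma boundary_gates:
  assumes "star_arrangement V E Obs R" "R \<noteq> {}" "Obs \<subseteq> V"
  obtains g where "\<And>w. w \<in> Obs \<Longrightarrow> g w \<in> boundary_set E Obs R"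
    "\<And>w. w \<in> Obs \<Longrightarrow> path_edges E (g w) w \<subseteq> E - star_edges E Obs R"
    "\<And>s w. s \<in> \<Union>R \<Longrightarrow> w \<in> Obs \<Longrightarrow> path_edges E s w = path_edges E s (g w) \<union> path_edges E (g w) w"
proof -
  have "\<forall>w\<in>Obs. \<exists>g. g \<in> boundary_set E Obs R \<and> path_edges E g w \<subseteq> E - star_edges E Obs R \<and>
      (\<forall>s\<in>\<Union>R. path_edges E s w = path_edges E s g \<union> path_edges E g w)"
  proof
    fix w assume w: "w \<in> Obs"
    obtain g where "g \<in> boundary_set E Obs R" "path_edges E g w \<subseteq> E - star_edges E Obs R"
      "\<And>s. s \<in> \<Union>R \<Longrightarrow> path_edges E s w = path_edges E s g \<union> path_edges E g w"
      using boundary_gate[OF assms(1,2) w] w assms(3) by blast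
    then show "\<exists>g. g \<in> boundary_set E Obs R \<and> path_edges E g w \<subseteq> E - star_edges E Obs R \<and>
      (\<forall>s\<in>\<Union>R. path_edges E s w = path_edges E s g \<union> path_edges E g w)" by blast
  qed
  then have "\<exists>g. \<forall>w\<in>Obs. g w \<in> boundary_set E Obs R \<and> path_edges E (g w) w \<subseteq> E - star_edges E Obs R \<and>
      (\<forall>s\<in>\<Union>R. path_edges E s w = path_edges E s (g w) \<union> path_edges E (g w) w)"
    by (rule bchoice)
  then show ?thesis using that by blast
qed

end

lemma measurable_distr_kernel:
  assumes "prob_space Q" and "case_prod G \<in> N \<Otimes>\<^sub>M Q \<rightarrow>\<^sub>M M"
  shows "(\<lambda>v. distr Q M (G v)) \<in> N \<rightarrow>\<^sub>M subprob_algebra M"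
proof -
  have "(\<lambda>_. Q) \<in> N \<rightarrow>\<^sub>M subprob_algebra Q"
    using assms(1) by (intro measurable_const) (simp add: space_subprob_algebra prob_space_imp_subprob_space)
  then show ?thesis using measurable_distr2[OF assms(2)] by simp
qed

lemma emeasure_PiM_eq_nn_integral_kernel:
  fixes \<mu> :: "'i \<Rightarrow> 'a measure"
  assumes fin: "finite I" "finite J" and disj: "I \<inter> J = {}"
    and prob: "\<And>i. prob_space (\<mu> i)"
    and X: "X \<in> PiM (I \<union> J) \<mu> \<rightarrow>\<^sub>M N" and Y: "Y \<in> PiM (I \<union> J) \<mu> \<rightarrow>\<^sub>M M"
    and G: "case_prod G \<in> N \<Otimes>\<^sub>M PiM J \<mu> \<rightarrow>\<^sub>M M"
    and X_merge: "\<And>x y. X (merge I J (x, y)) = X' x"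
    and Y_merge: "\<And>x y. Y (merge I J (x, y)) = G (X' x) y"
    and A: "A \<in> sets N" and B: "B \<in> sets M"
  shows "emeasure (PiM (I \<union> J) \<mu>) {\<omega> \<in> space (PiM (I \<union> J) \<mu>). X \<omega> \<in> A \<and> Y \<omega> \<in> B}
       = (\<integral>\<^sup>+ v. indicator A v * emeasure (distr (PiM J \<mu>) M (G v)) B \<partial>distr (PiM (I \<union> J) \<mu>) N X)"
    (is "emeasure ?P ?S = (\<integral>\<^sup>+ v. ?h v \<partial>_)")
proof -
  interpret product_sigma_finite \<mu>
    using prob by (simp add: product_sigma_finite_def prob_space_imp_sigma_finite)
  interpret Q: prob_space "PiM J \<mu>"
    using prob by (rule prob_space_PiM)
  have merge_space: "merge I J (x, y) \<in> space ?P" if "x \<in> space (PiM I \<mu>)" "y \<in> space (PiM J \<mu>)" for x y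
    using measurable_space[OF measurable_merge, of "(x, y)"] that by (simp add: space_pair_measure)
  have X'_space: "X' x \<in> space N" if x: "x \<in> space (PiM I \<mu>)" for x
  proof -
    obtain y where "y \<in> space (PiM J \<mu>)" using Q.not_empty by blast
    then show ?thesis using measurable_space[OF X merge_space[OF x]] X_merge by simp
  qed
  have G_section: "G v \<in> PiM J \<mu> \<rightarrow>\<^sub>M M" if "v \<in> space N" for v
    using measurable_compose[OF measurable_Pair1'[OF that] G] by simp
  have h: "?h \<in> borel_measurable N"
    using measurable_compose[OF measurable_distr_kernel[OF Q.prob_space_axioms G]
        measurable_emeasure_subprob_algebra[OF B]] A by measurable
  have "?S = (X -` A \<inter> space ?P) \<inter> (Y -` B \<inter> space ?P)"
    by blast
  then have S: "?S \<in> sets ?P"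
    using measurable_sets[OF X A] measurable_sets[OF Y B] by auto
  have fibre: "(\<integral>\<^sup>+ y. indicator ?S (merge I J (x, y)) \<partial>PiM J \<mu>) = ?h (X' x)"
    if x: "x \<in> space (PiM I \<mu>)" for x
  proof -
    have "(\<integral>\<^sup>+ y. indicator ?S (merge I J (x, y)) \<partial>PiM J \<mu>)
        = (\<integral>\<^sup>+ y. indicator A (X' x) * indicator B (G (X' x) y) \<partial>PiM J \<mu>)"
      using merge_space[OF x] by (intro nn_integral_cong) (simp add: X_merge Y_merge indicator_def)
    also have "\<dots> = indicator A (X' x) * (\<integral>\<^sup>+ y. indicator B (G (X' x) y) \<partial>PiM J \<mu>)"
      by (intro nn_integral_cmult measurable_compose[OF G_section[OF X'_space[OF x]]]
          borel_measurable_indicator B)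
    also have "(\<integral>\<^sup>+ y. indicator B (G (X' x) y) \<partial>PiM J \<mu>) = (\<integral>\<^sup>+ z. indicator B z \<partial>distr (PiM J \<mu>) M (G (X' x)))"
      using B by (intro nn_integral_distr[symmetric] G_section X'_space x) simp
    also have "\<dots> = emeasure (distr (PiM J \<mu>) M (G (X' x))) B"
      using B by simp
    finally show ?thesis .
  qed
  have "emeasure ?P ?S = (\<integral>\<^sup>+ x. (\<integral>\<^sup>+ y. indicator ?S (merge I J (x, y)) \<partial>PiM J \<mu>) \<partial>PiM I \<mu>)"
    using S by (simp add: product_nn_integral_fold[OF disj fin, symmetric])
  also have "\<dots> = (\<integral>\<^sup>+ x. ?h (X' x) \<partial>PiM I \<mu>)"
    by (intro nn_integral_cong fibre)
  also have "\<dots> = (\<integral>\<^sup>+ x. (\<integral>\<^sup>+ y. ?h (X (merge I J (x, y))) \<partial>PiM J \<mu>) \<partial>PiM I \<mu>)"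
    by (simp add: X_merge Q.emeasure_space_1)
  also have "\<dots> = (\<integral>\<^sup>+ \<omega>. ?h (X \<omega>) \<partial>?P)"
    using measurable_compose[OF X h] by (rule product_nn_integral_fold[OF disj fin, symmetric])
  also have "\<dots> = (\<integral>\<^sup>+ v. ?h v \<partial>distr ?P N X)"
    using X h by (simp add: nn_integral_distr)
  finally show ?thesis .
qed

lemma measurable_sum_coordinates:
  fixes \<mu> :: "'i \<Rightarrow> real measure"
  assumes "F \<subseteq> I" "\<And>i. i \<in> F \<Longrightarrow> sets (\<mu> i) = sets borel"
  shows "(\<lambda>\<omega>. \<Sum>i\<in>F. \<omega> i) \<in> borel_measurable (PiM I \<mu>)"
proof (rule borel_measurable_sum)
  fix i assume i: "i \<in> F"
  have "(\<lambda>\<omega>. \<omega> i) \<in> PiM I \<mu> \<rightarrow>\<^sub>M \<mu> i"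
    using i assms(1) by (intro measurable_component_singleton) auto
  then show "(\<lambda>\<omega>. \<omega> i) \<in> borel_measurable (PiM I \<mu>)"
    unfolding measurable_cong_sets[OF refl assms(2)[OF i]] .
qed

lemma measurable_shifted_sums:
  fixes \<mu> :: "'i \<Rightarrow> real measure"
  assumes "\<And>w. w \<in> W \<Longrightarrow> g w \<in> U \<and> F w \<subseteq> J" "\<And>i. sets (\<mu> i) = sets borel"
  shows "(\<lambda>(v, y). \<lambda>w\<in>W. v (g w) + (\<Sum>i\<in>F w. y i))
    \<in> PiM U (\<lambda>_. borel) \<Otimes>\<^sub>M PiM J \<mu> \<rightarrow>\<^sub>M PiM W (\<lambda>_. borel)"
  unfolding case_prod_beta
proof (rule measurable_restrict)
  fix w assume w: "w \<in> W"
  have "(\<lambda>v. v (g w)) \<in> borel_measurable (PiM U (\<lambda>_. borel))"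
    using assms(1)[OF w] by (intro measurable_component_singleton) auto
  moreover have "(\<lambda>y. \<Sum>i\<in>F w. y i) \<in> borel_measurable (PiM J \<mu>)"
    using assms w by (intro measurable_sum_coordinates) auto
  ultimately show "(\<lambda>x. fst x (g w) + (\<Sum>i\<in>F w. snd x i))
      \<in> borel_measurable (PiM U (\<lambda>_. borel) \<Otimes>\<^sub>M PiM J \<mu>)"
    by (intro borel_measurable_add measurable_compose[OF measurable_fst]
        measurable_compose[OF measurable_snd])
qed

definition gate_kernel ::
    "('a \<Rightarrow> 'a) \<Rightarrow> 'a set set \<Rightarrow> 'a set \<Rightarrow> 'a set set \<Rightarrow> ('a set \<Rightarrow> real measure) \<Rightarrow> ('a \<Rightarrow> real) \<Rightarrow> ('a \<Rightarrow> real) measure"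
  where "gate_kernel g E Obs J \<mu> v = distr (PiM J \<mu>) (PiM Obs (\<lambda>_. borel))
    (\<lambda>y. \<lambda>w\<in>Obs. v (g w) + (\<Sum>e\<in>path_edges E (g w) w. y e))"

lemma measurable_gate_kernel:
  assumes "\<And>w. w \<in> Obs \<Longrightarrow> g w \<in> U" "\<And>w. w \<in> Obs \<Longrightarrow> path_edges E (g w) w \<subseteq> J"
    and "\<And>e. prob_space (\<mu> e)" "\<And>e. sets (\<mu> e) = sets borel"
  shows "gate_kernel g E Obs J \<mu> \<in> PiM U (\<lambda>_. borel) \<rightarrow>\<^sub>M subprob_algebra (PiM Obs (\<lambda>_. borel))"
proof -
  have "(\<lambda>(v, y). \<lambda>w\<in>Obs. v (g w) + (\<Sum>e\<in>path_edges E (g w) w. y e))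
      \<in> PiM U (\<lambda>_. borel) \<Otimes>\<^sub>M PiM J \<mu> \<rightarrow>\<^sub>M PiM Obs (\<lambda>_. borel)"
    using measurable_shifted_sums[of Obs g U "\<lambda>w. path_edges E (g w) w" J \<mu>] assms by blast
  then show ?thesis
    unfolding gate_kernel_def[abs_def] by (rule measurable_distr_kernel[OF prob_space_PiM[OF assms(3)]])
qed

lemma prob_space_gate_kernel:
  assumes "\<And>w. w \<in> Obs \<Longrightarrow> g w \<in> U" "\<And>w. w \<in> Obs \<Longrightarrow> path_edges E (g w) w \<subseteq> J"
    and "\<And>e. prob_space (\<mu> e)" "\<And>e. sets (\<mu> e) = sets borel"
    and v: "v \<in> space (PiM U (\<lambda>_. borel))"
  shows "prob_space (gate_kernel g E Obs J \<mu> v)"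
proof -
  have "(\<lambda>y. \<lambda>w\<in>Obs. v (g w) + (\<Sum>e\<in>path_edges E (g w) w. y e)) \<in> PiM J \<mu> \<rightarrow>\<^sub>M PiM Obs (\<lambda>_. borel)"
    using measurable_compose[OF measurable_Pair1'[OF v]
        measurable_shifted_sums[of Obs g U "\<lambda>w. path_edges E (g w) w" J \<mu>]] assms by simp
  then show ?thesis
    unfolding gate_kernel_def using assms(3) by (intro prob_space.prob_space_distr prob_space_PiM)
qed

lemma emeasure_obs_vector_eq_kernel:
  fixes \<mu> :: "'a set \<Rightarrow> real measure"
  assumes fin: "finite Ein" "finite Eout" and disj: "Ein \<inter> Eout = {}"
    and prob: "\<And>e. prob_space (\<mu> e)" and borel: "\<And>e. sets (\<mu> e) = sets borel"
    and BR: "BR \<subseteq> Obs"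
    and gate: "\<And>w. w \<in> Obs \<Longrightarrow> g w \<in> BR" "\<And>w. w \<in> Obs \<Longrightarrow> path_edges E (g w) w \<subseteq> Eout"
    and inner: "\<And>b. b \<in> BR \<Longrightarrow> path_edges E s b \<subseteq> Ein"
    and split: "\<And>w. w \<in> Obs \<Longrightarrow> path_edges E s w = path_edges E s (g w) \<union> path_edges E (g w) w"
    and A: "A \<in> sets (PiM BR (\<lambda>_. borel))" and B: "B \<in> sets (PiM Obs (\<lambda>_. borel))"
  shows "emeasure (PiM (Ein \<union> Eout) \<mu>)
      {\<omega> \<in> space (PiM (Ein \<union> Eout) \<mu>). restrict (obs_vector E Obs s \<omega>) BR \<in> A \<and> obs_vector E Obs s \<omega> \<in> B}
    = (\<integral>\<^sup>+ v. indicator A v * emeasure (gate_kernel g E Obs Eout \<mu> v) B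
        \<partial>distr (PiM (Ein \<union> Eout) \<mu>) (PiM BR (\<lambda>_. borel)) (\<lambda>\<omega>. restrict (obs_vector E Obs s \<omega>) BR))"
  unfolding gate_kernel_def
proof (rule emeasure_PiM_eq_nn_integral_kernel[OF fin disj prob _ _ _ _ _ A B])
  have path_edges_s: "path_edges E s w \<subseteq> Ein \<union> Eout" if "w \<in> Obs" for w
    using split[OF that] gate[OF that] inner by blast
  have Y: "obs_vector E Obs s \<in> PiM (Ein \<union> Eout) \<mu> \<rightarrow>\<^sub>M PiM Obs (\<lambda>_. borel)"
    unfolding obs_vector_def infection_time_def
    using path_edges_s borel by (intro measurable_restrict measurable_sum_coordinates)
  then show "obs_vector E Obs s \<in> PiM (Ein \<union> Eout) \<mu> \<rightarrow>\<^sub>M PiM Obs (\<lambda>_. borel)" .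
  show "(\<lambda>\<omega>. restrict (obs_vector E Obs s \<omega>) BR) \<in> PiM (Ein \<union> Eout) \<mu> \<rightarrow>\<^sub>M PiM BR (\<lambda>_. borel)"
    using measurable_compose[OF Y measurable_restrict_subset[OF BR]] by simp
  show "case_prod (\<lambda>v y. \<lambda>w\<in>Obs. v (g w) + (\<Sum>e\<in>path_edges E (g w) w. y e))
      \<in> PiM BR (\<lambda>_. borel) \<Otimes>\<^sub>M PiM Eout \<mu> \<rightarrow>\<^sub>M PiM Obs (\<lambda>_. borel)"
    using measurable_shifted_sums[of Obs g BR "\<lambda>w. path_edges E (g w) w" Eout \<mu>] gate borel by simp
  have sum_left: "(\<Sum>e\<in>F. merge Ein Eout (x, y) e) = (\<Sum>e\<in>F. x e)" if "F \<subseteq> Ein" for F x y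
    using that disj by (intro sum.cong) auto
  have sum_right: "(\<Sum>e\<in>F. merge Ein Eout (x, y) e) = (\<Sum>e\<in>F. y e)" if "F \<subseteq> Eout" for F x y
    using that disj by (intro sum.cong) auto
  show "restrict (obs_vector E Obs s (merge Ein Eout (x, y))) BR = (\<lambda>b\<in>BR. \<Sum>e\<in>path_edges E s b. x e)"
    for x y
    using BR by (auto simp: obs_vector_def infection_time_def restrict_def fun_eq_iff sum_left[OF inner])
  show "obs_vector E Obs s (merge Ein Eout (x, y))
      = (\<lambda>w\<in>Obs. (\<lambda>b\<in>BR. \<Sum>e\<in>path_edges E s b. x e) (g w) + (\<Sum>e\<in>path_edges E (g w) w. y e))" for x y
  proof
    fix w
    show "obs_vector E Obs s (merge Ein Eout (x, y)) w
      = (\<lambda>w\<in>Obs. (\<lambda>b\<in>BR. \<Sum>e\<in>path_edges E s b. x e) (g w) + (\<Sum>e\<in>path_edges E (g w) w. y e)) w"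
    proof (cases "w \<in> Obs")
      case True
      have "finite (path_edges E s (g w))" "finite (path_edges E (g w) w)"
        using inner gate True fin by (meson finite_subset)+
      moreover have "path_edges E s (g w) \<inter> path_edges E (g w) w = {}"
        using inner gate True disj by blast
      ultimately show ?thesis
        using True split[OF True] gate[OF True]
        by (simp add: obs_vector_def infection_time_def sum.union_disjoint sum_left[OF inner] sum_right)
    qed (simp add: obs_vector_def)
  qed
qed

theorem theorem2:
  fixes V :: "'a set" and E :: "'a set set" and Obs :: "'a set"
    and \<mu> :: "'a set \<Rightarrow> real measure" and R :: "'a set set"
  assumes tree: "is_tree V E"
    and obs: "Obs \<noteq> {}" "Obs \<subset> V"
    and laws: "\<forall>e\<in>E. prob_space (\<mu> e) \<and> sets (\<mu> e) = sets borel \<and>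
                 emeasure (\<mu> e) {..<0} = 0 \<and> (\<forall>x. emeasure (\<mu> e) {x} = 0)"
    and star: "star_arrangement V E Obs R"
  shows "\<exists>K. K \<in> PiM (boundary_set E Obs R) (\<lambda>_. borel) \<rightarrow>\<^sub>M subprob_algebra (PiM Obs (\<lambda>_. borel)) \<and>
     (\<forall>x\<in>space (PiM (boundary_set E Obs R) (\<lambda>_. borel)). prob_space (K x)) \<and>
     (\<forall>s\<in>\<Union>R. \<forall>A\<in>sets (PiM (boundary_set E Obs R) (\<lambda>_. borel)). \<forall>B\<in>sets (PiM Obs (\<lambda>_. borel)).
        emeasure (PiM E \<mu>)
          {\<omega>\<in>space (PiM E \<mu>). restrict (obs_vector E Obs s \<omega>) (boundary_set E Obs R) \<in> A \<and>
                             obs_vector E Obs s \<omega> \<in> B}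
        = (\<integral>\<^sup>+ x. indicator A x * emeasure (K x) B
             \<partial>(distr (PiM E \<mu>) (PiM (boundary_set E Obs R) (\<lambda>_. borel))
                  (\<lambda>\<omega>. restrict (obs_vector E Obs s \<omega>) (boundary_set E Obs R)))))"
proof (cases "R = {}")
  case True
  let ?c = "\<lambda>w\<in>Obs. 0 :: real"
  have "prob_space (return (PiM Obs (\<lambda>_. borel)) ?c)"
    by (simp add: prob_space_return space_PiM)
  then show ?thesis
    using True by (intro exI[of _ "\<lambda>_. return (PiM Obs (\<lambda>_. borel)) ?c"])
      (simp add: measurable_const space_subprob_algebra prob_space_imp_subprob_space)
next
  case False
  interpret tree V E by (rule tree.intro) (rule tree)
  let ?Ein = "star_edges E Obs R" and ?Eout = "E - star_edges E Obs R"
  obtain g where gate: "\<And>w. w \<in> Obs \<Longrightarrow> g w \<in> boundary_set E Obs R"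
      "\<And>w. w \<in> Obs \<Longrightarrow> path_edges E (g w) w \<subseteq> ?Eout"
    and split: "\<And>s w. s \<in> \<Union>R \<Longrightarrow> w \<in> Obs \<Longrightarrow> path_edges E s w = path_edges E s (g w) \<union> path_edges E (g w) w"
    using boundary_gates[OF star False] obs(2) by blast
  \<comment> \<open>pad \<mu> outside E: the product lemmas want a probability law at every index\<close>
  define \<mu>' where "\<mu>' e = (if e \<in> E then \<mu> e else return borel (0 :: real))" for e
  have \<mu>': "prob_space (\<mu>' e)" "sets (\<mu>' e) = sets borel" for e
    using laws by (auto simp: \<mu>'_def prob_space_return)
  have PE: "PiM E \<mu> = PiM (?Ein \<union> ?Eout) \<mu>'"
    by (rule PiM_cong) (auto simp: star_edges_def \<mu>'_def)
  have fin: "finite ?Ein" "finite ?Eout" "?Ein \<inter> ?Eout = {}"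
    using finite_E unfolding star_edges_def by auto
  have BR: "boundary_set E Obs R \<subseteq> Obs" using boundary_set_subset by blast
  show ?thesis
    unfolding PE
  proof (intro exI[of _ "gate_kernel g E Obs ?Eout \<mu>'"] conjI ballI measurable_gate_kernel[OF gate \<mu>']
      prob_space_gate_kernel[OF gate \<mu>'] emeasure_obs_vector_eq_kernel[OF fin \<mu>' BR gate])
    show "path_edges E s b \<subseteq> ?Ein" if "s \<in> \<Union>R" "b \<in> boundary_set E Obs R" for s b
      using path_edges_in_star_edges[OF star that] .
  qed (use split in auto)
qed

end
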